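(* Let $\mathbf{MB}$ be the modification of a Standard Bloom filter in which each hash function $h_i$ ($i\in[k]$) is replaced by a truly random function $f_i : U \to [m]$. Let $\varepsilon\in(0,1)$ and $n\in\mathbb{N}$. Then $\mathbf{MB}$ is not $(n,t,\delta)$-resilient under the BP test for any $t\in\mathbb{N}$ and any $\delta\in(0,1)$ with $\delta<p_s$, where $p_s$ is the saturation probability of $\mathbf{MB}$.
   Context: A Standard Bloom filter with parameters $m,k$ stores a set $S\subseteq U$ (a finite universe of size $u$) as a bit string $M\in\{0,1\}^m$, initially all zeros, by setting bit $h_i(x)$ to $1$ for every $x\in S$ and $i\in[k]$, where $h_i:U\to[m]$; a query on $x$ returns $1$ iff all bits $h_i(x)$, $i\in[k]$, equal $1$. In $\mathbf{MB}$ the $h_i$ are truly random functions $f_i$. The saturation probability $p_s$ is the probability that, after encoding a set of size $n$, every bit of $M$ equals $1$. An element $x\notin S$ with query answer $1$ is a false positive. BP test with parameter $\delta$ (for an $(n,\delta)$-Bloom filter $\mathbf{B}=(\mathbf{B}_1,\mathbf{B}_2)$, security parameter $\lambda$): an adversary $\mathcal{A}=(\mathcal{A}_1,\mathcal{A}_2)$ plays: $\mathcal{A}_1(1^{\lambda+n\log u})$ outputs $S\subseteq U$ with $|S|=n$; $M\gets\mathbf{B}_1(1^{\lambda+n\log u},S)$; $\mathcal{A}_2(1^{\lambda+n\log u},S)$ makes at most $t$ adaptive queries $x_1,\dots,x_t$ to $\mathbf{B}_2(M,\cdot)$ and then outputs $(b,x^* )$ with $b\in\{0,1\}$ and $x^*\notin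 S\cup\{x_1,\dots,x_t\}$. The profit $C_{\mathcal{A}}$ is $1/\delta$ if $b=1$ and $x^*$ is a false positive, $-1/(1-\delta)$ if $b=1$ and $x^*$ is not a false positive, and $0$ if $b=0$. $\mathbf{B}$ is $(n,t,\delta)$-resilient under the BP test if for every adversary there is a negligible function $\mathrm{negl}$ with $\mathbb{E}[C_{\mathcal{A}}]\le\mathrm{negl}(\lambda)$, the expectation over the randomness of $\mathbf{B}$ and $\mathcal{A}$. *)

theory Defs
  imports "HOL-Probability.Probability"
begin

text \<open>
The universe U is a finite type 'u.  The k hash functions are packaged as one function
h :: nat \<times> 'u \<Rightarrow> nat, h (i, x) = f_i(x) \<in> [m] = {0..<m}, for i < k.
The memory M \<in> {0,1}^m is represented by the set of positions (in {0..<m}) whose bit is 1.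
\<close>

definition hash_space :: "nat \<Rightarrow> nat \<Rightarrow> (nat \<times> 'u::finite \<Rightarrow> nat) set" where
  "hash_space m k = PiE ({..<k} \<times> UNIV) (\<lambda>_. {..<m})"

definition MB_hashes :: "nat \<Rightarrow> nat \<Rightarrow> (nat \<times> 'u::finite \<Rightarrow> nat) pmf" where
  "MB_hashes m k = pmf_of_set (hash_space m k)"

definition bf_encode :: "nat \<Rightarrow> (nat \<times> 'u \<Rightarrow> nat) \<Rightarrow> 'u set \<Rightarrow> nat set" where
  "bf_encode k h S = {h (i, x) | i x. i < k \<and> x \<in> S}"

definition bf_query :: "nat \<Rightarrow> (nat \<times> 'u \<Rightarrow> nat) \<Rightarrow> nat set \<Rightarrow> 'u \<Rightarrow> bool" where
  "bf_query k h M x = (\<forall>i<k. h (i, x) \<in> M)"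

definition sat_prob_of :: "nat \<Rightarrow> nat \<Rightarrow> 'u::finite set \<Rightarrow> real" where
  "sat_prob_of m k S = measure_pmf.prob (MB_hashes m k) {h. bf_encode k h S = {..<m}}"

text \<open>Saturation probability p_s for sets of size n (it does not depend on the particular
set by symmetry; we take a fixed set of size n).\<close>
definition sat_prob :: "'u::finite itself \<Rightarrow> nat \<Rightarrow> nat \<Rightarrow> nat \<Rightarrow> real" where
  "sat_prob _ m k n = sat_prob_of m k (SOME S :: 'u set. card S = n)"

text \<open>A deterministic adaptive query strategy: given the list of oracle answers so far,
either make the next query (Inl x) or stop and output (b, x*) (Inr (b, x*)).
Randomised second-stage adversaries are distributions over such strategies.\<close>
type_synonym 'u strategy = "bool list \<Rightarrow> 'u + (bool \<times> 'u)"

fun run_strategy :: "'u strategy \<Rightarrow> ('u \<Rightarrow> bool) \<Rightarrow> nat \<Rightarrow> bool list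
                      \<Rightarrow> ('u list \<times> (bool \<times> 'u)) option" where
  "run_strategy \<sigma> orc 0 hist = (case \<sigma> hist of Inl _ \<Rightarrow> None | Inr r \<Rightarrow> Some ([], r))"
| "run_strategy \<sigma> orc (Suc t) hist = (case \<sigma> hist of
      Inr r \<Rightarrow> Some ([], r)
    | Inl x \<Rightarrow> map_option (\<lambda>(qs, r). (x # qs, r)) (run_strategy \<sigma> orc t (hist @ [orc x])))"

definition valid_adversary ::
  "nat \<Rightarrow> nat \<Rightarrow> (nat \<Rightarrow> 'u set pmf) \<Rightarrow> (nat \<Rightarrow> 'u set \<Rightarrow> 'u strategy pmf) \<Rightarrow> bool" where
  "valid_adversary n t A1 A2 \<longleftrightarrow>
     (\<forall>sec. \<forall>S \<in> set_pmf (A1 sec). card S = n \<and>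
        (\<forall>\<sigma> \<in> set_pmf (A2 sec S). \<forall>orc. \<exists>qs b x.
            run_strategy \<sigma> orc t [] = Some (qs, (b, x)) \<and> x \<notin> S \<and> x \<notin> set qs))"

definition bp_profit :: "real \<Rightarrow> bool \<Rightarrow> bool \<Rightarrow> real" where
  "bp_profit \<delta> b fp = (if b then (if fp then 1 / \<delta> else - 1 / (1 - \<delta>)) else 0)"

definition bp_game ::
  "nat \<Rightarrow> nat \<Rightarrow> nat \<Rightarrow> real \<Rightarrow> (nat \<Rightarrow> 'u::finite set pmf) \<Rightarrow> (nat \<Rightarrow> 'u set \<Rightarrow> 'u strategy pmf)
     \<Rightarrow> nat \<Rightarrow> real pmf" where
  "bp_game m k t \<delta> A1 A2 sec = do {
     S \<leftarrow> A1 sec;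
     h \<leftarrow> MB_hashes m k;
     \<sigma> \<leftarrow> A2 sec S;
     let M = bf_encode k h S;
     return_pmf (case run_strategy \<sigma> (bf_query k h M) t [] of
                   None \<Rightarrow> 0
                 | Some (qs, (b, x)) \<Rightarrow> bp_profit \<delta> b (x \<notin> S \<and> bf_query k h M x))
   }"

definition negligible :: "(nat \<Rightarrow> real) \<Rightarrow> bool" where
  "negligible f \<longleftrightarrow> (\<forall>c::nat. \<exists>N. \<forall>sec\<ge>N. \<bar>f sec\<bar> < 1 / real sec ^ c)"

definition MB_BP_resilient :: "'u::finite itself \<Rightarrow> nat \<Rightarrow> nat \<Rightarrow> nat \<Rightarrow> nat \<Rightarrow> real \<Rightarrow> bool" where
  "MB_BP_resilient _ m k n t \<delta> \<longleftrightarrow>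
     (\<forall>(A1 :: nat \<Rightarrow> 'u set pmf) A2. valid_adversary n t A1 A2 \<longrightarrow>
        (\<exists>negl. negligible negl \<and>
           (\<forall>sec. measure_pmf.expectation (bp_game m k t \<delta> A1 A2 sec) (\<lambda>r. r) \<le> negl sec)))"

end

theory Submission
  imports Defs
begin

text \<open>
The adversary fixes any set S of size n and an element x \<notin> S, makes no queries and bets
b = 1 on x. Whenever the filter is saturated, every query answer is 1, so x is a false positive
with probability P \<ge> p_s > \<delta>. The expected profit P/\<delta> - (1 - P)/(1 - \<delta>) = (P - \<delta>)/(\<delta>(1 - \<delta>))
is then a positive constant, independent of the security parameter, hence not negligible.
\<close>

lemma negligible_below_pos_const:
  assumes "negligible f" and "0 < c"
  shows "\<exists>sec. f sec < c"
proof -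
  obtain N where N: "\<And>sec. sec \<ge> N \<Longrightarrow> \<bar>f sec\<bar> < 1 / real sec ^ 1"
    using assms(1) unfolding negligible_def by blast
  define s where "s = Suc (max N (nat \<lceil>1 / c\<rceil>))"
  have "1 / c < real s" and "0 < real s"
    unfolding s_def by linarith+
  hence "1 / real s < c"
    using assms(2) by (simp add: field_simps)
  moreover have "N \<le> s"
    unfolding s_def by simp
  hence "f s < 1 / real s"
    using N by (metis abs_less_iff power_one_right)
  ultimately show ?thesis by (meson less_trans)
qed

lemma expectation_bp_profit_bet:
  fixes p :: "'a pmf"
  assumes "0 < \<delta>" and "\<delta> < 1"
  shows "measure_pmf.expectation (map_pmf (\<lambda>\<omega>. bp_profit \<delta> True (\<omega> \<in> Q)) p) (\<lambda>r. r)
           = (measure_pmf.prob p Q - \<delta>) / (\<delta> * (1 - \<delta>))"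
proof -
  have profit: "bp_profit \<delta> True (\<omega> \<in> Q) = - 1 / (1 - \<delta>) + (1 / \<delta> + 1 / (1 - \<delta>)) * indicator Q \<omega>"
    for \<omega>
    by (simp add: bp_profit_def indicator_def)
  have "measure_pmf.expectation (map_pmf (\<lambda>\<omega>. bp_profit \<delta> True (\<omega> \<in> Q)) p) (\<lambda>r. r)
          = - 1 / (1 - \<delta>) + (1 / \<delta> + 1 / (1 - \<delta>)) * measure_pmf.prob p Q"
    unfolding integral_map_pmf profit
    by (simp add: integral_indicator measure_pmf.emeasure_eq_measure)
  also have "\<dots> = (measure_pmf.prob p Q - \<delta>) / (\<delta> * (1 - \<delta>))"
    using assms by (simp add: divide_simps)
  finally show ?thesis .
qed

lemma set_pmf_MB_hashes:
  assumes "0 < m"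
  shows "set_pmf (MB_hashes m k :: (nat \<times> 'u::finite \<Rightarrow> nat) pmf) = hash_space m k"
proof -
  have "finite (hash_space m k :: (nat \<times> 'u \<Rightarrow> nat) set)"
    unfolding hash_space_def by (intro finite_PiE) auto
  moreover have "(hash_space m k :: (nat \<times> 'u \<Rightarrow> nat) set) \<noteq> {}"
    unfolding hash_space_def using assms by (auto simp: PiE_eq_empty_iff)
  ultimately show ?thesis
    unfolding MB_hashes_def by simp
qed

lemma bf_query_saturated:
  assumes "h \<in> hash_space m k" and "bf_encode k h S = {..<m}"
  shows "bf_query k h (bf_encode k h S) x"
  using assms unfolding bf_query_def hash_space_def by (auto simp: PiE_iff)

lemma sat_prob_of_le_prob_bf_query:
  assumes "0 < m"
  shows "sat_prob_of m k S
           \<le> measure_pmf.prob (MB_hashes m k) {h. bf_query k h (bf_encode k h S) x}"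
  unfolding sat_prob_of_def
proof (rule measure_pmf.finite_measure_mono_AE)
  show "AE h\<in>{h. bf_encode k h S = {..<m}} in MB_hashes m k.
          h \<in> {h. bf_query k h (bf_encode k h S) x}"
    by (rule AE_pmfI) (use bf_query_saturated set_pmf_MB_hashes[OF assms] in blast)
qed simp

definition bet_strategy :: "'u \<Rightarrow> 'u strategy" where
  "bet_strategy x = (\<lambda>_. Inr (True, x))"

lemma run_bet_strategy: "run_strategy (bet_strategy x) orc t [] = Some ([], (True, x))"
  by (cases t) (simp_all add: bet_strategy_def)

lemma valid_adversary_bet:
  assumes "card S = n" and "x \<notin> S"
  shows "valid_adversary n t (\<lambda>_. return_pmf S) (\<lambda>_ _. return_pmf (bet_strategy x))"
  using assms unfolding valid_adversary_def by (auto simp: run_bet_strategy)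

lemma bp_game_bet:
  "bp_game m k t \<delta> (\<lambda>_. return_pmf S) (\<lambda>_ _. return_pmf (bet_strategy x)) sec
     = map_pmf (\<lambda>h. bp_profit \<delta> True (h \<in> {h. x \<notin> S \<and> bf_query k h (bf_encode k h S) x}))
         (MB_hashes m k)"
  unfolding bp_game_def map_pmf_def by (simp add: run_bet_strategy bind_return_pmf)

theorem mainTheorem5:
  fixes m k n t :: nat and \<delta> :: real
  assumes "0 < m"
    and "n < CARD('u::finite)"
    and "0 < \<delta>" and "\<delta> < 1"
    and "\<delta> < sat_prob TYPE('u) m k n"
  shows "\<not> MB_BP_resilient TYPE('u) m k n t \<delta>"
proof
  assume resilient: "MB_BP_resilient TYPE('u) m k n t \<delta>"
  define S :: "'u set" where "S = (SOME S. card S = n)"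
  have "\<exists>S :: 'u set. card S = n"
    using assms(2) by (meson less_imp_le obtain_subset_with_card_n)
  hence card_S: "card S = n"
    unfolding S_def by (rule someI_ex)
  moreover have "S \<noteq> UNIV"
    using card_S assms(2) by auto
  ultimately obtain x where x: "x \<notin> S"
    by blast
  define P where "P = measure_pmf.prob (MB_hashes m k) {h. x \<notin> S \<and> bf_query k h (bf_encode k h S) x}"
  have "\<delta> < P"
    using assms(5) sat_prob_of_le_prob_bf_query[OF assms(1), of k S x] x
    unfolding P_def sat_prob_def S_def by simp
  hence gain: "0 < (P - \<delta>) / (\<delta> * (1 - \<delta>))"
    using assms(3,4) by simp
  have expectation: "measure_pmf.expectation
      (bp_game m k t \<delta> (\<lambda>_. return_pmf S) (\<lambda>_ _. return_pmf (bet_strategy x)) sec) (\<lambda>r. r)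
      = (P - \<delta>) / (\<delta> * (1 - \<delta>))" for sec
    unfolding bp_game_bet expectation_bp_profit_bet[OF assms(3,4)] P_def ..
  obtain negl where "negligible negl" and "\<And>sec. (P - \<delta>) / (\<delta> * (1 - \<delta>)) \<le> negl sec"
    using resilient valid_adversary_bet[OF card_S x, of t] expectation
    unfolding MB_BP_resilient_def by metis
  thus False
    using negligible_below_pos_const[OF _ gain] by (meson not_less)
qed

end
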